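(* Let $d\ge 2$ and let $\rho$ be a density matrix on $\mathbb{C}^d$ with entries $\rho_{jk}=\langle j|\rho|k\rangle$, $j,k\in\{0,\dots,d-1\}$, in the computational basis. Then $$F_c(\rho)=\frac{1}{d}+\frac{1}{d}\,C_{l_1}(\rho)$$ if and only if one can choose arguments $\theta_{jk}\in[0,2\pi]$ of the entries (i.e. $\rho_{jk}=|\rho_{jk}|e^{\mathfrak{i}\theta_{jk}}$, with $\theta_{jk}$ arbitrary when $\rho_{jk}=0$) such that for all $j,p,k\in\{0,\dots,d-1\}$ there is an integer $n$ with $$\theta_{jp}+\theta_{pk}=2n\pi+\theta_{jk}.$$
   Context: Coherence is taken with respect to the computational basis $\{|0\rangle,\dots,|d-1\rangle\}$. The $l_1$-norm coherence is $C_{l_1}(\rho)=\sum_{j\neq k}|\langle j|\rho|k\rangle|$. The set of maximally coherent states is $\mathcal{M}=\{|\phi\rangle=\frac{1}{\sqrt d}\sum_{j=0}^{d-1}e^{\mathfrak{i}\theta_j}|j\rangle:\theta_j\in[0,2\pi]\}$. The coherence fraction of a state $\rho$ is $F_c(\rho)=\max_{|\phi\rangle\in\mathcal{M}}\langle\phi|\rho|\phi\rangle$. *)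

theory Defs
  imports "HOL-Analysis.Analysis"
begin

text \<open>A d x d complex matrix is represented as a function nat => nat => complex,
  only entries with indices below d being relevant (computational basis |0>,...,|d-1>).
  Vectors in C^d are functions nat => complex, only indices below d relevant.\<close>

definition density_matrix :: "nat \<Rightarrow> (nat \<Rightarrow> nat \<Rightarrow> complex) \<Rightarrow> bool" where
  "density_matrix d \<rho> \<longleftrightarrow>
     (\<forall>j<d. \<forall>k<d. \<rho> k j = cnj (\<rho> j k)) \<and>
     (\<forall>v :: nat \<Rightarrow> complex. 0 \<le> Re (\<Sum>j<d. \<Sum>k<d. cnj (v j) * \<rho> j k * v k)) \<and>
     (\<Sum>j<d. \<rho> j j) = 1"

definition expval :: "nat \<Rightarrow> (nat \<Rightarrow> nat \<Rightarrow> complex) \<Rightarrow> (nat \<Rightarrow> complex) \<Rightarrow> complex" where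
  "expval d \<rho> \<phi> = (\<Sum>j<d. \<Sum>k<d. cnj (\<phi> j) * \<rho> j k * \<phi> k)"

definition C_l1 :: "nat \<Rightarrow> (nat \<Rightarrow> nat \<Rightarrow> complex) \<Rightarrow> real" where
  "C_l1 d \<rho> = (\<Sum>j<d. \<Sum>k<d. if j \<noteq> k then cmod (\<rho> j k) else 0)"

definition max_coherent :: "nat \<Rightarrow> (nat \<Rightarrow> complex) set" where
  "max_coherent d = {\<phi>. \<exists>\<theta> :: nat \<Rightarrow> real. (\<forall>j<d. 0 \<le> \<theta> j \<and> \<theta> j \<le> 2 * pi) \<and>
       (\<forall>j<d. \<phi> j = exp (\<i> * complex_of_real (\<theta> j)) / complex_of_real (sqrt (real d)))}"

text \<open>Coherence fraction: maximum (supremum, attained) of <phi|rho|phi> over maximally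
  coherent states; <phi|rho|phi> is real for Hermitian rho, so we take the real part.\<close>
definition coherence_fraction :: "nat \<Rightarrow> (nat \<Rightarrow> nat \<Rightarrow> complex) \<Rightarrow> real" where
  "coherence_fraction d \<rho> = (SUP \<phi>\<in>max_coherent d. Re (expval d \<rho> \<phi>))"

end

theory Submission
  imports Defs
begin

text \<open>For a maximally coherent state with amplitudes e^(i \<beta>_j) / sqrt d, the quantity
  d <\<phi>|\<rho>|\<phi>> equals the sum of Re (\<rho>_jk e^(i (\<beta>_k - \<beta>_j))), which is bounded termwise by
  |\<rho>_jk|; these bounds add up to 1 + C_l1(\<rho>) because the diagonal of a density matrix is
  nonnegative with trace 1. The supremum defining the coherence fraction is attained (the
  phases range over a compact box), so equality holds iff some \<beta> makes every term real and
  nonnegative, i.e. \<rho>_jk = |\<rho>_jk| e^(i (\<beta>_j - \<beta>_k)). Phases of this potential form are exactly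
  the phase systems satisfying the cocycle condition modulo 2\<pi>: take \<beta>_j = \<theta>_j0, and
  conversely reduce \<beta>_j - \<beta>_k modulo 2\<pi>.\<close>

lemma density_matrix_diag_norm:
  assumes "density_matrix d \<rho>" and "j < d"
  shows "cmod (\<rho> j j) = Re (\<rho> j j)"
proof -
  have "\<rho> j j = cnj (\<rho> j j)"
    using assms unfolding density_matrix_def by blast
  then have "Im (\<rho> j j) = 0"
    by (metis cnj.sel(2) neg_equal_zero)
  define e where "e = (\<lambda>i. if i = j then 1 else 0 :: complex)"
  have "cnj (e a) * \<rho> a b * e b = (if b = j then if a = j then \<rho> j j else 0 else 0)" for a b
    by (simp add: e_def)
  then have "(\<Sum>a<d. \<Sum>b<d. cnj (e a) * \<rho> a b * e b) = \<rho> j j"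
    using assms(2) by simp
  moreover have "0 \<le> Re (\<Sum>a<d. \<Sum>b<d. cnj (e a) * \<rho> a b * e b)"
    using assms(1) unfolding density_matrix_def by blast
  ultimately have "0 \<le> Re (\<rho> j j)"
    by simp
  with \<open>Im (\<rho> j j) = 0\<close> show ?thesis
    by (simp add: cmod_eq_Re)
qed

lemma density_matrix_sum_norm:
  assumes "density_matrix d \<rho>"
  shows "(\<Sum>j<d. \<Sum>k<d. cmod (\<rho> j k)) = 1 + C_l1 d \<rho>"
proof -
  have "(\<Sum>k<d. cmod (\<rho> j k)) = cmod (\<rho> j j) + (\<Sum>k<d. if j \<noteq> k then cmod (\<rho> j k) else 0)"
    if "j < d" for j
  proof -
    have "(\<Sum>k<d. cmod (\<rho> j k)) =
        (\<Sum>k<d. (if j = k then cmod (\<rho> j k) else 0) + (if j \<noteq> k then cmod (\<rho> j k) else 0))"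
      by (intro sum.cong) auto
    then show ?thesis
      using that by (simp only: sum.distrib) simp
  qed
  then have "(\<Sum>j<d. \<Sum>k<d. cmod (\<rho> j k)) = (\<Sum>j<d. cmod (\<rho> j j)) + C_l1 d \<rho>"
    unfolding C_l1_def by (simp add: sum.distrib)
  also have "(\<Sum>j<d. cmod (\<rho> j j)) = Re (\<Sum>j<d. \<rho> j j)"
    using density_matrix_diag_norm[OF assms] by simp
  also have "(\<Sum>j<d. \<rho> j j) = 1"
    using assms unfolding density_matrix_def by blast
  finally show ?thesis
    by simp
qed

lemma Re_eq_norm_iff: "Re z = cmod z \<longleftrightarrow> z = complex_of_real (cmod z)"
proof
  assume "Re z = cmod z"
  then have "Im z = 0"
    using cmod_power2[of z] by simp
  with \<open>Re z = cmod z\<close> show "z = complex_of_real (cmod z)"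
    by (simp add: complex_eq_iff)
qed (metis Re_complex_of_real)

lemma Re_mult_cis_le_norm: "Re (z * cis a) \<le> cmod z"
  using complex_Re_le_cmod[of "z * cis a"] by (simp add: norm_mult)

lemma Re_mult_cis_eq_norm_iff:
  "Re (z * cis a) = cmod z \<longleftrightarrow> z = complex_of_real (cmod z) * cis (- a)"
proof -
  have "Re (z * cis a) = cmod z \<longleftrightarrow> z * cis a = complex_of_real (cmod z)"
    using Re_eq_norm_iff[of "z * cis a"] by (simp add: norm_mult)
  also have "\<dots> \<longleftrightarrow> z = complex_of_real (cmod z) * cis (- a)"
    by (simp add: eq_divide_eq flip: cis_inverse divide_inverse)
  finally show ?thesis .
qed

lemma cis_add_multiple_2pi: "cis (x + 2 * pi * real_of_int n) = cis x"
  by (simp flip: cis_mult)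

lemma sum_eq_sum_iff_pointwise_le:
  fixes f g :: "'a \<Rightarrow> 'b :: ordered_cancel_comm_monoid_add"
  assumes "finite A" and "\<And>x. x \<in> A \<Longrightarrow> f x \<le> g x"
  shows "sum f A = sum g A \<longleftrightarrow> (\<forall>x\<in>A. f x = g x)"
  using sum_mono_inv[of f A g] assms by (auto intro: sum.cong)

definition phase_state :: "nat \<Rightarrow> (nat \<Rightarrow> real) \<Rightarrow> nat \<Rightarrow> complex" where
  "phase_state d \<beta> j = cis (\<beta> j) / complex_of_real (sqrt (real d))"

lemma phase_state_in_max_coherent:
  assumes "\<forall>j<d. 0 \<le> \<beta> j \<and> \<beta> j \<le> 2 * pi"
  shows "phase_state d \<beta> \<in> max_coherent d"
  using assms by (auto simp: max_coherent_def phase_state_def cis_conv_exp)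

lemma expval_cong:
  assumes "\<forall>j<d. \<phi> j = \<psi> j"
  shows "expval d \<rho> \<phi> = expval d \<rho> \<psi>"
  using assms unfolding expval_def by (intro sum.cong) auto

lemma expval_phase_state:
  assumes "d > 0"
  shows "real d * Re (expval d \<rho> (phase_state d \<beta>)) =
    (\<Sum>j<d. \<Sum>k<d. Re (\<rho> j k * cis (\<beta> k - \<beta> j)))"
proof -
  have sqrt_sq: "complex_of_real (sqrt (real d)) * complex_of_real (sqrt (real d)) = of_nat d"
    unfolding of_real_mult[symmetric] by simp
  have "cnj (phase_state d \<beta> j) * \<rho> j k * phase_state d \<beta> k
      = \<rho> j k * (cis (- \<beta> j) * cis (\<beta> k)) / (complex_of_real (sqrt (real d)) * complex_of_real (sqrt (real d)))"
    for j k
    by (simp add: phase_state_def cis_cnj)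
  then have "cnj (phase_state d \<beta> j) * \<rho> j k * phase_state d \<beta> k = \<rho> j k * cis (\<beta> k - \<beta> j) / of_nat d"
    for j k
    by (simp add: sqrt_sq cis_mult)
  then have "expval d \<rho> (phase_state d \<beta>) = (\<Sum>j<d. \<Sum>k<d. \<rho> j k * cis (\<beta> k - \<beta> j)) / of_nat d"
    by (simp add: expval_def sum_divide_distrib)
  then show ?thesis
    using assms by (simp add: Re_divide_of_nat)
qed

lemma phase_state_expval_le:
  assumes "d > 0"
  shows "real d * Re (expval d \<rho> (phase_state d \<beta>)) \<le> (\<Sum>j<d. \<Sum>k<d. cmod (\<rho> j k))"
  unfolding expval_phase_state[OF assms] by (intro sum_mono Re_mult_cis_le_norm)

definition phase_aligned :: "nat \<Rightarrow> (nat \<Rightarrow> nat \<Rightarrow> complex) \<Rightarrow> (nat \<Rightarrow> real) \<Rightarrow> bool" where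
  "phase_aligned d \<rho> \<beta> \<longleftrightarrow>
     (\<forall>j<d. \<forall>k<d. \<rho> j k = complex_of_real (cmod (\<rho> j k)) * cis (\<beta> j - \<beta> k))"

lemma phase_state_expval_eq_iff:
  assumes "d > 0"
  shows "real d * Re (expval d \<rho> (phase_state d \<beta>)) = (\<Sum>j<d. \<Sum>k<d. cmod (\<rho> j k))
    \<longleftrightarrow> phase_aligned d \<rho> \<beta>"
proof -
  define f where "f = (\<lambda>(j, k). Re (\<rho> j k * cis (\<beta> k - \<beta> j)))"
  define g where "g = (\<lambda>(j, k). cmod (\<rho> j k))"
  have le: "f x \<le> g x" for x
    unfolding f_def g_def by (cases x) (simp only: prod.case Re_mult_cis_le_norm)
  have "real d * Re (expval d \<rho> (phase_state d \<beta>)) = sum f ({..<d} \<times> {..<d})"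
    "(\<Sum>j<d. \<Sum>k<d. cmod (\<rho> j k)) = sum g ({..<d} \<times> {..<d})"
    by (simp_all add: expval_phase_state[OF assms] sum.cartesian_product f_def g_def)
  moreover have "f (j, k) = g (j, k) \<longleftrightarrow> \<rho> j k = complex_of_real (cmod (\<rho> j k)) * cis (\<beta> j - \<beta> k)"
    for j k
    using Re_mult_cis_eq_norm_iff[of "\<rho> j k" "\<beta> k - \<beta> j"] by (simp add: f_def g_def)
  ultimately show ?thesis
    using sum_eq_sum_iff_pointwise_le[of "{..<d} \<times> {..<d}" f g] le
    by (auto simp: phase_aligned_def)
qed

definition angle_box :: "nat \<Rightarrow> (nat \<Rightarrow> real) set" where
  "angle_box d = Pi UNIV (\<lambda>j. if j < d then {0..2 * pi} else {0})"

lemma angle_box_bounds: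
  assumes "\<beta> \<in> angle_box d"
  shows "\<forall>j<d. 0 \<le> \<beta> j \<and> \<beta> j \<le> 2 * pi"
proof (intro allI impI)
  fix j assume "j < d"
  with Pi_mem[OF assms[unfolded angle_box_def] UNIV_I, of j] show "0 \<le> \<beta> j \<and> \<beta> j \<le> 2 * pi"
    by simp
qed

lemma compact_angle_box: "compact (angle_box d)"
proof -
  have "compactin (product_topology (\<lambda>_. euclidean) UNIV)
      (PiE UNIV (\<lambda>j. if j < d then {0..2 * pi} else {0 :: real}))"
    by (subst compactin_PiE) auto
  then show ?thesis
    by (simp add: angle_box_def euclidean_product_topology PiE_UNIV_domain)
qed

lemma continuous_on_expval_phase_state:
  "continuous_on S (\<lambda>\<beta>. Re (expval d \<rho> (phase_state d \<beta>)))"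
  unfolding expval_def phase_state_def
  by (intro continuous_intros continuous_on_subset[OF continuous_on_product_coordinates]) auto

lemma expval_max_coherent_image:
  "(\<lambda>\<phi>. Re (expval d \<rho> \<phi>)) ` max_coherent d =
    (\<lambda>\<beta>. Re (expval d \<rho> (phase_state d \<beta>))) ` angle_box d"
proof (intro equalityI subsetI)
  fix x assume "x \<in> (\<lambda>\<phi>. Re (expval d \<rho> \<phi>)) ` max_coherent d"
  then obtain \<phi> \<beta> where x: "x = Re (expval d \<rho> \<phi>)"
    and \<beta>: "\<forall>j<d. 0 \<le> \<beta> j \<and> \<beta> j \<le> 2 * pi" "\<forall>j<d. \<phi> j = phase_state d \<beta> j"
    by (auto simp: max_coherent_def phase_state_def cis_conv_exp)
  define \<beta>' where "\<beta>' j = (if j < d then \<beta> j else 0)" for j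
  have "\<beta>' \<in> angle_box d"
    using \<beta>(1) by (simp add: angle_box_def \<beta>'_def)
  moreover have "x = Re (expval d \<rho> (phase_state d \<beta>'))"
    unfolding x using \<beta>(2) by (intro arg_cong[where f = Re] expval_cong) (simp add: phase_state_def \<beta>'_def)
  ultimately show "x \<in> (\<lambda>\<beta>. Re (expval d \<rho> (phase_state d \<beta>))) ` angle_box d"
    by blast
next
  fix x assume "x \<in> (\<lambda>\<beta>. Re (expval d \<rho> (phase_state d \<beta>))) ` angle_box d"
  then obtain \<beta> where "\<beta> \<in> angle_box d" "x = Re (expval d \<rho> (phase_state d \<beta>))"
    by blast
  moreover from \<open>\<beta> \<in> angle_box d\<close> have "phase_state d \<beta> \<in> max_coherent d"
    by (intro phase_state_in_max_coherent angle_box_bounds)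
  ultimately show "x \<in> (\<lambda>\<phi>. Re (expval d \<rho> \<phi>)) ` max_coherent d"
    by blast
qed

lemma compact_expval_max_coherent_image:
  "compact ((\<lambda>\<phi>. Re (expval d \<rho> \<phi>)) ` max_coherent d)"
  unfolding expval_max_coherent_image
  by (intro compact_continuous_image continuous_on_expval_phase_state compact_angle_box)

lemma expval_le_coherence_fraction:
  assumes "\<phi> \<in> max_coherent d"
  shows "Re (expval d \<rho> \<phi>) \<le> coherence_fraction d \<rho>"
  unfolding coherence_fraction_def
  using compact_expval_max_coherent_image[of d \<rho>] assms
  by (intro cSUP_upper bounded_imp_bdd_above compact_imp_bounded)

lemma coherence_fraction_attained:
  "\<exists>\<beta>. (\<forall>j<d. 0 \<le> \<beta> j \<and> \<beta> j \<le> 2 * pi) \<and>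
    coherence_fraction d \<rho> = Re (expval d \<rho> (phase_state d \<beta>))"
proof -
  let ?V = "(\<lambda>\<beta>. Re (expval d \<rho> (phase_state d \<beta>))) ` angle_box d"
  have "(\<lambda>_. 0) \<in> angle_box d"
    by (simp add: angle_box_def)
  then have "compact ?V" "?V \<noteq> {}"
    using compact_expval_max_coherent_image[of d \<rho>] by (auto simp: expval_max_coherent_image)
  then obtain x where "x \<in> ?V" and max: "\<forall>y\<in>?V. y \<le> x"
    using compact_attains_sup by blast
  then obtain \<beta> where "\<beta> \<in> angle_box d" and x: "x = Re (expval d \<rho> (phase_state d \<beta>))"
    by blast
  have "coherence_fraction d \<rho> = Sup ?V"
    by (simp add: coherence_fraction_def expval_max_coherent_image)
  also have "\<dots> = x"
    using \<open>x \<in> ?V\<close> max by (intro cSup_eq_maximum) auto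
  finally show ?thesis
    using angle_box_bounds[OF \<open>\<beta> \<in> angle_box d\<close>] x by blast
qed

definition consistent_phases :: "nat \<Rightarrow> (nat \<Rightarrow> nat \<Rightarrow> complex) \<Rightarrow> (nat \<Rightarrow> nat \<Rightarrow> real) \<Rightarrow> bool" where
  "consistent_phases d \<rho> \<theta> \<longleftrightarrow>
     (\<forall>j<d. \<forall>k<d. 0 \<le> \<theta> j k \<and> \<theta> j k \<le> 2 * pi \<and>
          \<rho> j k = complex_of_real (cmod (\<rho> j k)) * exp (\<i> * complex_of_real (\<theta> j k))) \<and>
     (\<forall>j<d. \<forall>p<d. \<forall>k<d. \<exists>n :: int. \<theta> j p + \<theta> p k = 2 * real_of_int n * pi + \<theta> j k)"

lemma consistent_phases_imp_phase_aligned: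
  assumes "d > 0" and "consistent_phases d \<rho> \<theta>"
  shows "\<exists>\<beta>. (\<forall>j<d. 0 \<le> \<beta> j \<and> \<beta> j \<le> 2 * pi) \<and> phase_aligned d \<rho> \<beta>"
proof (intro exI conjI)
  show "\<forall>j<d. 0 \<le> \<theta> j 0 \<and> \<theta> j 0 \<le> 2 * pi"
    using assms unfolding consistent_phases_def by blast
  show "phase_aligned d \<rho> (\<lambda>j. \<theta> j 0)"
    unfolding phase_aligned_def
  proof (intro allI impI)
    fix j k assume "j < d" "k < d"
    then obtain n :: int where n: "\<theta> j k + \<theta> k 0 = 2 * real_of_int n * pi + \<theta> j 0"
      and \<rho>: "\<rho> j k = complex_of_real (cmod (\<rho> j k)) * cis (\<theta> j k)"
      using assms unfolding consistent_phases_def cis_conv_exp by blast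
    have "\<theta> j k = (\<theta> j 0 - \<theta> k 0) + 2 * pi * real_of_int n"
      using n by (simp add: algebra_simps)
    with \<rho> show "\<rho> j k = complex_of_real (cmod (\<rho> j k)) * cis (\<theta> j 0 - \<theta> k 0)"
      by (simp only: cis_add_multiple_2pi)
  qed
qed

lemma phase_aligned_imp_consistent_phases:
  assumes "phase_aligned d \<rho> \<beta>"
  shows "\<exists>\<theta>. consistent_phases d \<rho> \<theta>"
proof -
  define m where "m j k = \<lfloor>(\<beta> j - \<beta> k) / (2 * pi)\<rfloor>" for j k
  define \<theta> where "\<theta> j k = (\<beta> j - \<beta> k) - 2 * pi * real_of_int (m j k)" for j k
  have "\<theta> j k = 2 * pi * frac ((\<beta> j - \<beta> k) / (2 * pi))" for j k
    by (simp add: \<theta>_def m_def frac_def field_simps)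
  then have range: "0 \<le> \<theta> j k \<and> \<theta> j k \<le> 2 * pi" for j k
    using frac_lt_1[of "(\<beta> j - \<beta> k) / (2 * pi)"] by simp
  have "cis (\<theta> j k) = cis (\<beta> j - \<beta> k)" for j k
    using cis_add_multiple_2pi[of "\<theta> j k" "m j k"] by (simp add: \<theta>_def)
  moreover have "\<theta> j p + \<theta> p k = 2 * real_of_int (m j k - m j p - m p k) * pi + \<theta> j k" for j p k
    by (simp add: \<theta>_def algebra_simps)
  ultimately have "consistent_phases d \<rho> \<theta>"
    using assms range unfolding consistent_phases_def phase_aligned_def cis_conv_exp[symmetric]
    by metis
  then show ?thesis
    by blast
qed

lemma coherence_fraction_eq_iff_phase_aligned:
  assumes "d > 0" and "density_matrix d \<rho>"
  shows "real d * coherence_fraction d \<rho> = 1 + C_l1 d \<rho> \<longleftrightarrow>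
    (\<exists>\<beta>. (\<forall>j<d. 0 \<le> \<beta> j \<and> \<beta> j \<le> 2 * pi) \<and> phase_aligned d \<rho> \<beta>)"
proof -
  let ?F = "\<lambda>\<beta>. Re (expval d \<rho> (phase_state d \<beta>))"
  have sum_norm: "(\<Sum>j<d. \<Sum>k<d. cmod (\<rho> j k)) = 1 + C_l1 d \<rho>"
    using assms(2) by (rule density_matrix_sum_norm)
  obtain \<beta>\<^sub>0 where \<beta>\<^sub>0_range: "\<forall>j<d. 0 \<le> \<beta>\<^sub>0 j \<and> \<beta>\<^sub>0 j \<le> 2 * pi"
    and cf: "coherence_fraction d \<rho> = ?F \<beta>\<^sub>0"
    using coherence_fraction_attained by blast
  show ?thesis
  proof
    assume "real d * coherence_fraction d \<rho> = 1 + C_l1 d \<rho>"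
    then have "phase_aligned d \<rho> \<beta>\<^sub>0"
      using phase_state_expval_eq_iff[OF assms(1)] sum_norm cf by metis
    with \<beta>\<^sub>0_range show "\<exists>\<beta>. (\<forall>j<d. 0 \<le> \<beta> j \<and> \<beta> j \<le> 2 * pi) \<and> phase_aligned d \<rho> \<beta>"
      by blast
  next
    assume "\<exists>\<beta>. (\<forall>j<d. 0 \<le> \<beta> j \<and> \<beta> j \<le> 2 * pi) \<and> phase_aligned d \<rho> \<beta>"
    then obtain \<beta> where \<beta>_range: "\<forall>j<d. 0 \<le> \<beta> j \<and> \<beta> j \<le> 2 * pi"
      and "phase_aligned d \<rho> \<beta>"
      by blast
    then have "1 + C_l1 d \<rho> = real d * ?F \<beta>"
      using phase_state_expval_eq_iff[OF assms(1)] sum_norm by metis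
    also have "\<dots> \<le> real d * coherence_fraction d \<rho>"
      using expval_le_coherence_fraction[OF phase_state_in_max_coherent[OF \<beta>_range], of \<rho>]
      by (intro mult_left_mono) simp_all
    finally have "1 + C_l1 d \<rho> \<le> real d * coherence_fraction d \<rho>" .
    moreover have "real d * coherence_fraction d \<rho> \<le> 1 + C_l1 d \<rho>"
      using phase_state_expval_le[OF assms(1), of \<rho> \<beta>\<^sub>0] sum_norm by (simp add: cf)
    ultimately show "real d * coherence_fraction d \<rho> = 1 + C_l1 d \<rho>"
      by linarith
  qed
qed

theorem theorem1:
  fixes d :: nat and \<rho> :: "nat \<Rightarrow> nat \<Rightarrow> complex"
  assumes "d \<ge> 2" and "density_matrix d \<rho>"
  shows "coherence_fraction d \<rho> = 1 / real d + C_l1 d \<rho> / real d \<longleftrightarrow>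
    (\<exists>\<theta> :: nat \<Rightarrow> nat \<Rightarrow> real.
       (\<forall>j<d. \<forall>k<d. 0 \<le> \<theta> j k \<and> \<theta> j k \<le> 2 * pi \<and>
            \<rho> j k = complex_of_real (cmod (\<rho> j k)) * exp (\<i> * complex_of_real (\<theta> j k))) \<and>
       (\<forall>j<d. \<forall>p<d. \<forall>k<d. \<exists>n :: int. \<theta> j p + \<theta> p k = 2 * real_of_int n * pi + \<theta> j k))"
proof -
  have "d > 0"
    using assms(1) by simp
  then have "coherence_fraction d \<rho> = 1 / real d + C_l1 d \<rho> / real d \<longleftrightarrow>
      real d * coherence_fraction d \<rho> = 1 + C_l1 d \<rho>"
    by (auto simp: field_simps)
  also have "\<dots> \<longleftrightarrow> (\<exists>\<beta>. (\<forall>j<d. 0 \<le> \<beta> j \<and> \<beta> j \<le> 2 * pi) \<and> phase_aligned d \<rho> \<beta>)"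
    using coherence_fraction_eq_iff_phase_aligned[OF \<open>d > 0\<close> assms(2)] .
  also have "\<dots> \<longleftrightarrow> (\<exists>\<theta>. consistent_phases d \<rho> \<theta>)"
    using consistent_phases_imp_phase_aligned[OF \<open>d > 0\<close>] phase_aligned_imp_consistent_phases
    by blast
  finally show ?thesis
    unfolding consistent_phases_def .
qed

end
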